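(* Let $S$ be a unital ring and let $n\geq2$. Then $\xi(M_n(S))\leq 2$; that is, for every $a\in M_n(S)$ there exist $b_1,c_1,d_1,e_1,b_2,c_2,d_2,e_2\in M_n(S)$ such that \[ a=[b_1,c_1][d_1,e_1]+[b_2,c_2][d_2,e_2]. \]
   Context: $M_n(S)$ is the ring of $n\times n$ matrices over $S$, and $[x,y]=xy-yx$. For a unital ring $R$ generated by its commutators, $\xi(R)$ is the minimal $N\in\mathbb{N}$ such that every element of $R$ is a sum of $N$ elements of the form $[b,c][d,e]$ with $b,c,d,e\in R$. *)

theory Defs
  imports "HOL-Analysis.Analysis"
begin

definition mcomm :: "('a::ring_1)^'n^'n \<Rightarrow> 'a^'n^'n \<Rightarrow> 'a^'n^'n" where
  "mcomm x y = x ** y - y ** x"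

end

theory Submission
  imports Defs
begin

(* Index rows and columns by 0, ..., n - 1 and write e_ij for the matrix units.  With
  E = \<Sum> e_2k,2k, N = \<Sum> e_2k,2k+1 and N' = \<Sum> e_2k+1,2k, a single product [E, N - N'] [E, y]
  reproduces the two diagonal Peirce blocks (E - g) z E + (1 - E) z (1 - E) of any z, where
  g = e_n-1,n-1 projects onto the unpaired last index when n is odd.  The rest of a is produced by
  a second product [P, Q] [E + K, m]: [P, Q] is the sign E - (1 - E), corrected by - g + K + K'
  with K = e_n-3,n-1 and K' = e_n-1,n-3 so that it is right invertible on E, and m is chosen block
  by block (g, K and K' vanish when n is even).  Only the multiplication table of E, g, N, N', K,
  K' enters, so the argument works in any ring containing such a frame. *)

definition commutator :: "'a::ring \<Rightarrow> 'a \<Rightarrow> 'a" where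
  "commutator x y = x * y - y * x"

lemma mult_eq_imp_mult_assoc_eq: "x * y = z \<Longrightarrow> x * (y * w) = z * (w::'a::semigroup_mult)"
  by (simp add: mult.assoc[symmetric])

lemma mult_eq_0_through_left: "x * e = 0 \<Longrightarrow> e * y = y \<Longrightarrow> x * y = (0::'a::semiring_0)"
  by (metis mult.assoc mult_zero_left)

lemma mult_eq_0_through_right: "x * e = x \<Longrightarrow> e * y = 0 \<Longrightarrow> x * y = (0::'a::semiring_0)"
  by (metis mult.assoc mult_zero_right)

locale commutator_frame =
  fixes E g N N' K K' :: "'r::ring_1"
  assumes E_E: "E * E = E"
    and g_g: "g * g = g" and E_g: "E * g = g" and g_E: "g * E = g"
    and E_N: "E * N = N" and N_E: "N * E = 0"
    and E_N': "E * N' = 0" and N'_E: "N' * E = N'"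
    and N_N': "N * N' = E - g" and N'_N: "N' * N = 1 - E"
    and E_K: "E * K = K" and K_g: "K * g = K" and g_K: "g * K = 0"
    and g_K': "g * K' = K'" and K'_g: "K' * g = 0" and K'_E: "K' * E = K'"
    and K'_K: "K' * K = g"
begin

lemma g_N: "g * N = 0"
proof -
  have "N * N' * N = N - g * N"
    by (simp add: N_N' E_N algebra_simps)
  moreover have "N * N' * N = N"
    by (simp add: N'_N N_E algebra_simps)
  ultimately show ?thesis
    by simp
qed

lemma N'_g: "N' * g = 0"
proof -
  have "N' * N * N' = N' - N' * g"
    by (simp add: N_N' N'_E algebra_simps)
  moreover have "N' * N * N' = N'"
    by (simp add: N'_N E_N' algebra_simps)
  ultimately show ?thesis
    by simp
qed

lemma K_E: "K * E = K"
  by (metis K_g g_E mult.assoc)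

lemma E_K': "E * K' = K'"
  by (metis E_g g_K' mult.assoc)

lemmas zero_products =
  mult_eq_0_through_left[OF N_E E_N] mult_eq_0_through_left[OF N_E E_K]
  mult_eq_0_through_left[OF N_E E_K'] mult_eq_0_through_left[OF N'_g g_K']
  mult_eq_0_through_left[OF K'_g g_K'] mult_eq_0_through_right[OF N'_E E_N']
  mult_eq_0_through_right[OF K_g g_K] mult_eq_0_through_right[OF K_g g_N]
  mult_eq_0_through_right[OF K_E E_N']

lemmas frame_rules = E_E g_g E_g g_E E_N N_E E_N' N'_E N_N' N'_N E_K K_g g_K g_K' K'_g K'_E K'_K
  g_N N'_g K_E E_K' zero_products

lemmas frame_simps = frame_rules frame_rules[THEN mult_eq_imp_mult_assoc_eq]

lemma commutator_E_mult_commutator_E: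
  "commutator E (N - N') * commutator E (N * z * (1 - E) - N' * z * E)
     = (E - g) * z * E + (1 - E) * z * (1 - E)"
  unfolding commutator_def by (simp add: algebra_simps frame_simps)

definition frame_sign :: 'r where
  "frame_sign = E - g - (1 - E) + K + K'"

definition frame_sign_inv_E :: 'r where
  "frame_sign_inv_E = E - 2 * g - K * K' + K + K'"

lemma frame_sign_eq_commutator: "frame_sign = commutator (N + K' * N - N' * K) (N' + K * K' * N)"
  unfolding frame_sign_def commutator_def by (simp add: algebra_simps frame_simps)

lemma frame_sign_mult_inv_E: "frame_sign * frame_sign_inv_E = E"
  unfolding frame_sign_def frame_sign_inv_E_def
  by (simp add: algebra_simps frame_simps mult_2 mult_2_right)

lemma E_frame_sign_commute: "E * frame_sign = frame_sign * E"
  unfolding frame_sign_def by (simp add: algebra_simps frame_simps)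

lemma one_minus_E_frame_sign: "(1 - E) * frame_sign = E - 1"
  unfolding frame_sign_def by (simp add: algebra_simps frame_simps)

lemma g_frame_sign: "g * frame_sign = K'"
  unfolding frame_sign_def by (simp add: algebra_simps frame_simps)

definition off_diagonal_commutator :: "'r \<Rightarrow> 'r" where
  "off_diagonal_commutator a = commutator (E + K)
    ((E - K) * frame_sign_inv_E * a * (1 - E) + (1 - E) * a * (E - K) + g * a * E)"

(* The off-diagonal blocks of [E + K, m] are (E + K) m (1 - E) and - (1 - E) m (E + K), and
  (E + K) (E - K) = (E - K) (E + K) = E. *)
lemma frame_sign_mult_commutator_blocks:
  fixes a :: 'r
  defines "w \<equiv> off_diagonal_commutator a"
  shows "E * (frame_sign * w) * (1 - E) = E * a * (1 - E)"
    and "(1 - E) * (frame_sign * w) * E = (1 - E) * a * E"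
    and "g * (frame_sign * w) * E = g * a * E"
proof -
  have w_upper: "E * w * (1 - E) = frame_sign_inv_E * a * (1 - E)"
    unfolding w_def off_diagonal_commutator_def frame_sign_inv_E_def commutator_def
    by (simp add: algebra_simps frame_simps mult_2 mult_2_right)
  have w_lower: "(1 - E) * w * E = - ((1 - E) * a * E)"
    unfolding w_def off_diagonal_commutator_def commutator_def by (simp add: algebra_simps frame_simps)
  have w_corner: "K' * w * E = g * a * E"
    unfolding w_def off_diagonal_commutator_def commutator_def by (simp add: algebra_simps frame_simps)
  have "E * (frame_sign * w) * (1 - E) = frame_sign * (E * w * (1 - E))"
    by (metis E_frame_sign_commute mult.assoc)
  also have "\<dots> = E * a * (1 - E)"
    by (metis w_upper frame_sign_mult_inv_E mult.assoc)
  finally show "E * (frame_sign * w) * (1 - E) = E * a * (1 - E)" .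
  have "(1 - E) * (frame_sign * w) * E = (E - 1) * w * E"
    by (simp add: mult.assoc[symmetric] one_minus_E_frame_sign)
  also have "\<dots> = - ((1 - E) * w * E)"
    by (simp add: algebra_simps)
  also have "\<dots> = (1 - E) * a * E"
    by (simp add: w_lower)
  finally show "(1 - E) * (frame_sign * w) * E = (1 - E) * a * E" .
  show "g * (frame_sign * w) * E = g * a * E"
    by (metis w_corner g_frame_sign mult.assoc)
qed

lemma eq_diagonal_blocks:
  assumes "E * z * (1 - E) = 0" and "(1 - E) * z * E = 0" and "g * z * E = 0"
  shows "z = (E - g) * z * E + (1 - E) * z * (1 - E)"
proof -
  have "z = E * z * E + E * z * (1 - E) + (1 - E) * z * E + (1 - E) * z * (1 - E)"
    by (simp add: algebra_simps)
  also have "\<dots> = (E - g) * z * E + (1 - E) * z * (1 - E)"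
    using assms by (simp add: left_diff_distrib)
  finally show ?thesis .
qed

theorem sum_of_two_commutator_products:
  fixes a :: 'r
  shows "\<exists>b1 c1 d1 e1 b2 c2 d2 e2.
     a = commutator b1 c1 * commutator d1 e1 + commutator b2 c2 * commutator d2 e2"
proof -
  define w where "w = off_diagonal_commutator a"
  define z where "z = a - frame_sign * w"
  have "E * z * (1 - E) = 0" "(1 - E) * z * E = 0" "g * z * E = 0"
    using frame_sign_mult_commutator_blocks[of a] unfolding z_def w_def
    by (simp_all add: algebra_simps)
  then have "z = commutator E (N - N') * commutator E (N * z * (1 - E) - N' * z * E)"
    unfolding commutator_E_mult_commutator_E by (rule eq_diagonal_blocks)
  then have "a = commutator E (N - N') * commutator E (N * z * (1 - E) - N' * z * E)
      + commutator (N + K' * N - N' * K) (N' + K * K' * N) * w"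
    unfolding z_def frame_sign_eq_commutator by (simp add: algebra_simps)
  then show ?thesis
    unfolding w_def off_diagonal_commutator_def by blast
qed

end

typedef ('a, 'n) square_matrix = "UNIV :: ('a^'n^'n) set"
  morphisms to_matrix of_matrix
  by simp

setup_lifting type_definition_square_matrix

instantiation square_matrix :: (ring_1, finite) ring_1
begin

lift_definition zero_square_matrix :: "('a::ring_1, 'n::finite) square_matrix" is 0 .

lift_definition one_square_matrix :: "('a::ring_1, 'n::finite) square_matrix" is "mat 1" .

lift_definition plus_square_matrix ::
  "('a::ring_1, 'n::finite) square_matrix \<Rightarrow> ('a, 'n) square_matrix \<Rightarrow> ('a, 'n) square_matrix"
  is "(+)" .

lift_definition minus_square_matrix ::
  "('a::ring_1, 'n::finite) square_matrix \<Rightarrow> ('a, 'n) square_matrix \<Rightarrow> ('a, 'n) square_matrix"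
  is "(-)" .

lift_definition uminus_square_matrix ::
  "('a::ring_1, 'n::finite) square_matrix \<Rightarrow> ('a, 'n) square_matrix"
  is uminus .

lift_definition times_square_matrix ::
  "('a::ring_1, 'n::finite) square_matrix \<Rightarrow> ('a, 'n) square_matrix \<Rightarrow> ('a, 'n) square_matrix"
  is "(**)" .

instance
proof
  fix a b c :: "('a::ring_1, 'n::finite) square_matrix"
  show "a * b * c = a * (b * c)"
    by transfer (simp add: matrix_mul_assoc)
  show "(a + b) * c = a * c + b * c"
    by transfer (simp add: matrix_matrix_mult_def vec_eq_iff distrib_right sum.distrib)
  show "a * (b + c) = a * b + a * c"
    by transfer (rule matrix_add_ldistrib)
  show "1 * a = a" "a * 1 = a"
    by (transfer, simp)+
  show "a + b + c = a + (b + c)" "a + b = b + a" "0 + a = a" "- a + a = 0" "a - b = a + - b"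
    by (transfer, simp add: algebra_simps)+
  show "(0 :: ('a, 'n) square_matrix) \<noteq> 1"
    by transfer (auto simp: vec_eq_iff mat_def)
qed

end

lemma square_matrix_eqI: "(\<And>x y. to_matrix A $ x $ y = to_matrix B $ x $ y) \<Longrightarrow> A = B"
  by (simp add: to_matrix_inject[symmetric] vec_eq_iff)

lemma to_matrix_times_nth:
  "to_matrix (A * B) $ x $ y = (\<Sum>z\<in>UNIV. to_matrix A $ x $ z * to_matrix B $ z $ y)"
  by (simp add: times_square_matrix.rep_eq matrix_matrix_mult_def)

lemma to_matrix_commutator: "to_matrix (commutator A B) = mcomm (to_matrix A) (to_matrix B)"
  by (simp add: commutator_def mcomm_def times_square_matrix.rep_eq minus_square_matrix.rep_eq)

definition pmap_matrix ::
  "('n \<Rightarrow> nat) \<Rightarrow> (nat \<Rightarrow> bool) \<Rightarrow> (nat \<Rightarrow> nat) \<Rightarrow> ('a::ring_1, 'n::finite) square_matrix"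
  where "pmap_matrix \<iota> D \<phi> = of_matrix (\<chi> x y. if D (\<iota> x) \<and> \<phi> (\<iota> x) = \<iota> y then 1 else 0)"

lemma to_matrix_pmap_matrix:
  "to_matrix (pmap_matrix \<iota> D \<phi>) $ x $ y = (if D (\<iota> x) \<and> \<phi> (\<iota> x) = \<iota> y then 1 else 0)"
  by (simp add: pmap_matrix_def of_matrix_inverse)

lemma pmap_matrix_diff:
  "\<forall>i. D' i \<longrightarrow> D i \<Longrightarrow>
    pmap_matrix \<iota> D \<phi> - pmap_matrix \<iota> D' \<phi> = pmap_matrix \<iota> (\<lambda>i. D i \<and> \<not> D' i) \<phi>"
  by (rule square_matrix_eqI) (auto simp: to_matrix_pmap_matrix minus_square_matrix.rep_eq)

lemma one_eq_pmap_matrix: "inj \<iota> \<Longrightarrow> 1 = pmap_matrix \<iota> (\<lambda>_. True) id"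
  by (rule square_matrix_eqI)
    (auto simp: to_matrix_pmap_matrix one_square_matrix.rep_eq mat_def inj_eq)

lemma zero_eq_pmap_matrix: "0 = pmap_matrix \<iota> (\<lambda>_. False) \<phi>"
  by (rule square_matrix_eqI) (simp add: to_matrix_pmap_matrix zero_square_matrix.rep_eq)

lemma sum_if_eq_times:
  "finite A \<Longrightarrow>
    (\<Sum>k\<in>A. (if P \<and> m = k then 1 else 0) * f k) = (if P \<and> m \<in> A then f m else (0::'a::semiring_1))"
  by (cases P) (simp_all add: if_distrib[of "\<lambda>u. u * _"] cong: if_cong)

context
  fixes \<iota> :: "'n::finite \<Rightarrow> nat" and n :: nat
  assumes enum: "bij_betw \<iota> UNIV {..<n}"
begin

lemma pmap_matrix_mult:
  "pmap_matrix \<iota> D \<phi> * pmap_matrix \<iota> D' \<psi>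
     = (pmap_matrix \<iota> (\<lambda>i. D i \<and> \<phi> i < n \<and> D' (\<phi> i)) (\<psi> \<circ> \<phi>) :: ('a::ring_1, 'n) square_matrix)"
  (is "?A = ?B")
proof (rule square_matrix_eqI)
  fix x y
  have "to_matrix ?A $ x $ y
      = (\<Sum>k<n. (if D (\<iota> x) \<and> \<phi> (\<iota> x) = k then 1 else 0) *
          (if D' k \<and> \<psi> k = \<iota> y then 1 else 0))"
    unfolding to_matrix_times_nth to_matrix_pmap_matrix by (rule sum.reindex_bij_betw[OF enum])
  also have "\<dots> = to_matrix ?B $ x $ y"
    by (simp add: sum_if_eq_times to_matrix_pmap_matrix)
  finally show "to_matrix ?A $ x $ y = to_matrix ?B $ x $ y" .
qed

lemma pmap_matrix_eqI:
  assumes "\<And>i. i < n \<Longrightarrow> D i \<and> \<phi> i < n \<longleftrightarrow> D' i \<and> \<phi>' i < n"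
    and "\<And>i. i < n \<Longrightarrow> D i \<Longrightarrow> \<phi> i < n \<Longrightarrow> \<phi> i = \<phi>' i"
  shows "pmap_matrix \<iota> D \<phi> = (pmap_matrix \<iota> D' \<phi>' :: ('a::ring_1, 'n) square_matrix)"
proof (rule square_matrix_eqI)
  fix x y
  have "\<iota> x < n" "\<iota> y < n"
    using enum by (auto simp: bij_betw_def)
  then have "D (\<iota> x) \<and> \<phi> (\<iota> x) = \<iota> y \<longleftrightarrow> D' (\<iota> x) \<and> \<phi>' (\<iota> x) = \<iota> y"
    using assms(1)[of "\<iota> x"] assms(2)[of "\<iota> x"] by auto
  then show "to_matrix (pmap_matrix \<iota> D \<phi> :: ('a, 'n) square_matrix) $ x $ y
      = to_matrix (pmap_matrix \<iota> D' \<phi>' :: ('a, 'n) square_matrix) $ x $ y"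
    by (simp add: to_matrix_pmap_matrix)
qed

lemma commutator_frame_pmap_matrices:
  assumes "n \<ge> 2"
  shows "commutator_frame
    (pmap_matrix \<iota> even id :: ('a::ring_1, 'n) square_matrix)
    (pmap_matrix \<iota> (\<lambda>i. even i \<and> Suc i = n) id)
    (pmap_matrix \<iota> even Suc)
    (pmap_matrix \<iota> odd (\<lambda>i. i - 1))
    (pmap_matrix \<iota> (\<lambda>i. odd n \<and> i = n - 3) (\<lambda>_. n - 1))
    (pmap_matrix \<iota> (\<lambda>i. odd n \<and> i = n - 1) (\<lambda>_. n - 3))"
proof -
  have "inj \<iota>"
    using enum by (simp add: bij_betw_def)
  note pmap_matrix_algebra = pmap_matrix_mult pmap_matrix_diff one_eq_pmap_matrix[OF this]
    zero_eq_pmap_matrix[of \<iota> id]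
  show ?thesis
    apply unfold_locales
     apply (simp_all add: pmap_matrix_algebra)
    apply (rule pmap_matrix_eqI; use \<open>n \<ge> 2\<close> in \<open>auto; presburger\<close>)+
    done
qed

end

lemma square_matrix_commutator_frame:
  assumes "CARD('n::finite) \<ge> 2"
  shows "\<exists>E g N N' K K' :: ('a::ring_1, 'n) square_matrix. commutator_frame E g N N' K K'"
proof -
  obtain \<iota> :: "'n \<Rightarrow> nat" where "bij_betw \<iota> UNIV {..<CARD('n)}"
    using ex_bij_betw_finite_nat[of "UNIV :: 'n set"] by (auto simp: atLeast0LessThan)
  then show ?thesis
    using commutator_frame_pmap_matrices assms by blast
qed

theorem theorem5p4:
  fixes a :: "('a::ring_1)^'n^'n"
  assumes "CARD('n) \<ge> 2"
  shows "\<exists>b1 c1 d1 e1 b2 c2 d2 e2 :: 'a^'n^'n.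
           a = mcomm b1 c1 ** mcomm d1 e1 + mcomm b2 c2 ** mcomm d2 e2"
proof -
  obtain E g N N' K K' :: "('a, 'n) square_matrix" where frame: "commutator_frame E g N N' K K'"
    using square_matrix_commutator_frame assms by blast
  obtain b1 c1 d1 e1 b2 c2 d2 e2 :: "('a, 'n) square_matrix" where
    "of_matrix a = commutator b1 c1 * commutator d1 e1 + commutator b2 c2 * commutator d2 e2"
    using commutator_frame.sum_of_two_commutator_products[OF frame] by blast
  then have "a = mcomm (to_matrix b1) (to_matrix c1) ** mcomm (to_matrix d1) (to_matrix e1)
        + mcomm (to_matrix b2) (to_matrix c2) ** mcomm (to_matrix d2) (to_matrix e2)"
    by (metis of_matrix_inverse UNIV_I plus_square_matrix.rep_eq times_square_matrix.rep_eq
        to_matrix_commutator)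
  then show ?thesis
    by blast
qed

end
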